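(* Let $n \in \mathbb{N}_0$, and let $P(x), Q(x) \in \mathbb{Z}[x]$ be $n$-good polynomials. If $P(x) \equiv Q(x) \pmod 2$, then $P(x) \equiv Q(x) \pmod{2^{n+1}}$.
   Context: For $P, Q, M \in \mathbb{Z}[x]$ with $M \ne 0$, $P \equiv Q \pmod{M}$ means $M$ divides $P - Q$ in $\mathbb{Z}[x]$. For $n \in \mathbb{N}_0$, a polynomial $P(x) \in \mathbb{Z}[x]$ is $n$-good if $P(x^{2^m}) \equiv P(x)^{2^m} \pmod{2^{m+1}}$ for every $m \in \{0, 1, \dots, n\}$. *)

theory Defs
  imports "HOL-Computational_Algebra.Polynomial"
begin

definition poly_cong :: "int poly \<Rightarrow> int poly \<Rightarrow> int poly \<Rightarrow> bool" where
  "poly_cong P Q M \<longleftrightarrow> M dvd (P - Q)"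

definition n_good :: "nat \<Rightarrow> int poly \<Rightarrow> bool" where
  "n_good n P \<longleftrightarrow> (\<forall>m\<in>{0..n}.
     poly_cong (pcompose P (monom 1 (2 ^ m))) (P ^ (2 ^ m)) [:2 ^ (m + 1):])"

end

theory Submission
  imports Defs
begin

text \<open>Write \<open>N = 2^n\<close>. As \<open>a^2 - b^2 = (a - b)(a + b)\<close> with \<open>a + b\<close> even when \<open>a - b\<close> is,
  squaring raises the power of 2 dividing \<open>a - b\<close> by one,
  so \<open>P^N \<equiv> Q^N\<close> mod \<open>2^(n+1)\<close>; by goodness this gives \<open>P(x^N) \<equiv> Q(x^N)\<close> mod \<open>2^(n+1)\<close>.
  Substituting \<open>x^N\<close> for \<open>x\<close> only spreads out the coefficients, so \<open>P \<equiv> Q\<close> mod \<open>2^(n+1)\<close>.\<close>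

lemma coeff_pcompose_monom_mult:
  fixes p :: "'a::comm_semiring_1 poly"
  assumes "k > 0"
  shows "coeff (pcompose p (monom 1 k)) (i * k) = coeff p i"
proof (induction p arbitrary: i)
  case 0
  then show ?case by simp
next
  case (pCons a p)
  then show ?case
    using assms by (cases i) (simp_all add: pcompose_pCons coeff_monom_mult coeff_pCons split: nat.split)
qed

lemma const_poly_dvd_of_dvd_pcompose_monom:
  fixes p :: "'a::{comm_semiring_1,semiring_no_zero_divisors} poly"
  assumes "k > 0" and "[:c:] dvd pcompose p (monom 1 k)"
  shows "[:c:] dvd p"
  using assms coeff_pcompose_monom_mult[OF \<open>k > 0\<close>, of p]
  by (metis const_poly_dvd_iff)

lemma two_power_dvd_power_two_power_diff:
  fixes a b :: "'a::comm_ring_1"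
  assumes "2 dvd a - b"
  shows "2 ^ Suc k dvd a ^ 2 ^ k - b ^ 2 ^ k"
proof (induction k)
  case 0
  then show ?case using assms by simp
next
  case (Suc k)
  let ?A = "a ^ 2 ^ k" and ?B = "b ^ 2 ^ k"
  have "2 dvd ?A - ?B"
    using Suc dvd_trans dvd_power[of "Suc k" "2::'a"] by blast
  then have "2 dvd (?A - ?B) + 2 * ?B"
    by (rule dvd_add[OF _ dvd_triv_left])
  moreover have "(?A - ?B) + 2 * ?B = ?A + ?B"
    by (simp add: algebra_simps)
  ultimately have "2 ^ Suc k * 2 dvd (?A - ?B) * (?A + ?B)"
    using Suc mult_dvd_mono by metis
  moreover have "(?A - ?B) * (?A + ?B) = a ^ 2 ^ Suc k - b ^ 2 ^ Suc k"
    by (simp add: algebra_simps power_mult power2_eq_square)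
  ultimately show ?case
    by (simp add: mult.commute)
qed

theorem lemma3p6:
  fixes n :: nat and P Q :: "int poly"
  assumes "n_good n P" and "n_good n Q"
    and "poly_cong P Q [:2:]"
  shows "poly_cong P Q [:2 ^ (n + 1):]"
proof -
  let ?X = "monom (1::int) (2 ^ n)" and ?m = "[:2 ^ (n + 1):] :: int poly"
  have P_good: "?m dvd pcompose P ?X - P ^ 2 ^ n"
    using assms(1) unfolding n_good_def poly_cong_def by auto
  have Q_good: "?m dvd pcompose Q ?X - Q ^ 2 ^ n"
    using assms(2) unfolding n_good_def poly_cong_def by auto
  have "?m dvd P ^ 2 ^ n - Q ^ 2 ^ n"
    using two_power_dvd_power_two_power_diff[of P Q n] assms(3)
    by (simp add: poly_cong_def numeral_poly poly_const_pow mult.commute)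
  then have "?m dvd (pcompose P ?X - P ^ 2 ^ n) - (pcompose Q ?X - Q ^ 2 ^ n)
                    + (P ^ 2 ^ n - Q ^ 2 ^ n)"
    by (rule dvd_add[OF dvd_diff[OF P_good Q_good]])
  then have "?m dvd pcompose (P - Q) ?X"
    by (simp add: pcompose_diff)
  then show ?thesis
    unfolding poly_cong_def by (rule const_poly_dvd_of_dvd_pcompose_monom[rotated]) simp
qed

end
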